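(* Let $\mathbf{T},\hat{\mathbf{T}}\in\mathbb{R}^{N\times N}$ be symmetric (the true and perturbed covariance wavelet operators), let $h_0,\dots,h_{J-1}$ be wavelet functions, let $\Delta\ge0$ satisfy $\|\mathbf{H}_j(\hat{\mathbf{T}})-\mathbf{H}_j(\mathbf{T})\|\le\Delta$ for all $j$, and let $B>0$ satisfy $\|\mathbf{H}_j(\mathbf{T})\|\le B$ and $\|\mathbf{H}_j(\hat{\mathbf{T}})\|\le B$ for all $j$. Let $\mathbf{x}_{(j_\ell,\dots,j_1)}$ and $\hat{\mathbf{x}}_{(j_\ell,\dots,j_1)}$ be the scattering features of $\mathbf{x}\in\mathbb{R}^N$ computed on $\mathbf{T}$ and $\hat{\mathbf{T}}$ respectively. Then for every $\ell\ge1$ and every tuple $(j_\ell,\dots,j_1)\in\{0,\dots,J-1\}^\ell$, $$\|\hat{\mathbf{x}}_{(j_\ell,\dots,j_1)}-\mathbf{x}_{(j_\ell,\dots,j_1)}\|\le\ell\,\Delta\,B^{\ell-1}\|\mathbf{x}\|.$$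
   Context: For a symmetric $\mathbf{M}=\mathbf{V}\boldsymbol\Lambda\mathbf{V}^\top$ with eigenvalues $\lambda_1,\dots,\lambda_N$, $\mathbf{H}_j(\mathbf{M})=\mathbf{V}\operatorname{diag}(h_j(\lambda_1),\dots,h_j(\lambda_N))\mathbf{V}^\top$. The nonlinearity $\rho:\mathbb{R}\to\mathbb{R}$ acts entrywise and is non-expansive: $|\rho(a)-\rho(b)|\le|a-b|$ and $\rho(0)=0$ (e.g. $\rho=|\cdot|$). Scattering features on $\mathbf{M}$: $\mathbf{x}_{()}=\mathbf{x}$ and $\mathbf{x}_{(j_\ell,\dots,j_1)}=\rho(\mathbf{H}_{j_\ell}(\mathbf{M})\mathbf{x}_{(j_{\ell-1},\dots,j_1)})$. Norms are Euclidean for vectors and spectral for matrices. *)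

theory Defs
  imports "HOL-Analysis.Analysis"
begin

definition diag_mat :: "real^'n \<Rightarrow> real^'n^'n" where
  "diag_mat d = (\<chi> i j. if i = j then d $ i else 0)"

definition eigdec :: "real^'n^'n \<Rightarrow> real^'n^'n \<Rightarrow> real^'n \<Rightarrow> bool" where
  "eigdec M V lam \<longleftrightarrow> orthogonal_matrix V \<and> M = V ** diag_mat lam ** transpose V"

text \<open>Spectral matrix function H(M) = V diag(h(lambda_1),...,h(lambda_N)) V^T,
  using a chosen eigendecomposition (the result is independent of the choice).\<close>
definition mat_fun :: "(real \<Rightarrow> real) \<Rightarrow> real^'n^'n \<Rightarrow> real^'n^'n" where
  "mat_fun h M = (let (V, lam) = (SOME p. eigdec M (fst p) (snd p))
                  in V ** diag_mat (\<chi> i. h (lam $ i)) ** transpose V)"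

definition spec_norm :: "real^'n^'n \<Rightarrow> real" where
  "spec_norm A = onorm (\<lambda>x. A *v x)"

text \<open>Scattering features: the list [j_l, ..., j_1] (head is the last wavelet applied).\<close>
fun scat :: "(nat \<Rightarrow> real \<Rightarrow> real) \<Rightarrow> (real \<Rightarrow> real) \<Rightarrow> real^'n^'n \<Rightarrow> nat list \<Rightarrow> real^'n \<Rightarrow> real^'n" where
  "scat h \<rho> M [] x = x"
| "scat h \<rho> M (j # js) x = (\<chi> i. \<rho> ((mat_fun (h j) M *v scat h \<rho> M js x) $ i))"

end

theory Submission
  imports Defs
begin

text \<open>Passing from layer \<open>\<ell>\<close> to layer \<open>\<ell> + 1\<close>, the error splits into the filter
  perturbation applied to the perturbed feature (at most \<open>\<Delta> B^\<ell> \<parallel>x\<parallel>\<close>) plus the unperturbed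
  filter applied to the previous error (which is multiplied by at most \<open>B\<close>); the
  nonexpansive \<open>\<rho>\<close> increases neither. Unrolling gives \<open>\<ell> \<Delta> B^(\<ell>-1) \<parallel>x\<parallel>\<close>.\<close>

lemma norm_matrix_vector_mult_le_spec_norm:
  "norm (A *v x) \<le> spec_norm A * norm (x :: real^'n)"
  unfolding spec_norm_def
  by (rule onorm) (rule matrix_vector_mul_bounded_linear)

lemma norm_matrix_vector_mult_diff_le:
  fixes A A' :: "real^'n^'n" and u v :: "real^'n"
  shows "norm (A' *v u - A *v v) \<le> spec_norm (A' - A) * norm u + spec_norm A * norm (u - v)"
proof -
  have "A' *v u - A *v v = (A' - A) *v u + A *v (u - v)"
    by (simp add: matrix_vector_mult_diff_rdistrib matrix_vector_mult_diff_distrib)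
  also have "norm \<dots> \<le> norm ((A' - A) *v u) + norm (A *v (u - v))"
    by (rule norm_triangle_ineq)
  finally show ?thesis
    using norm_matrix_vector_mult_le_spec_norm[of "A' - A" u]
      norm_matrix_vector_mult_le_spec_norm[of A "u - v"]
    by linarith
qed

lemma norm_vec_map_nonexpansive_diff_le:
  assumes "\<And>a b. \<bar>\<rho> a - \<rho> b\<bar> \<le> \<bar>a - b\<bar>"
  shows "norm ((\<chi> i. \<rho> (v $ i)) - (\<chi> i. \<rho> (w $ i))) \<le> norm (v - (w :: real^'n))"
  by (rule norm_le_componentwise_cart) (simp add: assms)

lemma norm_vec_map_nonexpansive_le:
  assumes "\<And>a b. \<bar>\<rho> a - \<rho> b\<bar> \<le> \<bar>a - b\<bar>" and "\<rho> 0 = 0"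
  shows "norm (\<chi> i. \<rho> (v $ i)) \<le> norm (v :: real^'n)"
proof -
  have "(\<chi> i. \<rho> ((0 :: real^'n) $ i)) = 0"
    by (simp add: vec_eq_iff assms(2))
  then show ?thesis
    using norm_vec_map_nonexpansive_diff_le[OF assms(1), of v 0] by simp
qed

lemma norm_scat_le:
  assumes "\<And>a b. \<bar>\<rho> a - \<rho> b\<bar> \<le> \<bar>a - b\<bar>" and "\<rho> 0 = 0" and "B \<ge> 0"
    and "\<And>j. j \<in> set js \<Longrightarrow> spec_norm (mat_fun (h j) M) \<le> B"
  shows "norm (scat h \<rho> M js x) \<le> B ^ length js * norm x"
  using assms(4)
proof (induction js)
  case Nil
  then show ?case by simp
next
  case (Cons j js)
  have "norm (scat h \<rho> M (j # js) x) \<le> norm (mat_fun (h j) M *v scat h \<rho> M js x)"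
    by (simp add: norm_vec_map_nonexpansive_le[OF assms(1,2)])
  also have "\<dots> \<le> spec_norm (mat_fun (h j) M) * norm (scat h \<rho> M js x)"
    by (rule norm_matrix_vector_mult_le_spec_norm)
  also have "\<dots> \<le> B * (B ^ length js * norm x)"
    using Cons by (intro mult_mono) (simp_all add: assms(3))
  finally show ?case
    by (simp add: mult.assoc)
qed

lemma norm_scat_diff_le:
  assumes "\<And>a b. \<bar>\<rho> a - \<rho> b\<bar> \<le> \<bar>a - b\<bar>" and "\<rho> 0 = 0" and "\<Delta> \<ge> 0" and "B \<ge> 0"
    and "\<And>j. j \<in> set js \<Longrightarrow> spec_norm (mat_fun (h j) M' - mat_fun (h j) M) \<le> \<Delta>"
    and "\<And>j. j \<in> set js \<Longrightarrow> spec_norm (mat_fun (h j) M) \<le> B"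
    and "\<And>j. j \<in> set js \<Longrightarrow> spec_norm (mat_fun (h j) M') \<le> B"
  shows "norm (scat h \<rho> M' js x - scat h \<rho> M js x)
           \<le> real (length js) * \<Delta> * B ^ (length js - 1) * norm x"
  using assms(5-7)
proof (induction js)
  case Nil
  then show ?case by simp
next
  case (Cons j js)
  let ?A = "mat_fun (h j) M" and ?A' = "mat_fun (h j) M'"
  let ?u = "scat h \<rho> M' js x" and ?v = "scat h \<rho> M js x" and ?k = "length js"
  have IH: "norm (?u - ?v) \<le> real ?k * \<Delta> * B ^ (?k - 1) * norm x"
    using Cons by simp
  have u: "norm ?u \<le> B ^ ?k * norm x"
    using Cons.prems(3) by (intro norm_scat_le[OF assms(1,2,4)]) simp
  have "norm (scat h \<rho> M' (j # js) x - scat h \<rho> M (j # js) x) \<le> norm (?A' *v ?u - ?A *v ?v)"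
    unfolding scat.simps by (rule norm_vec_map_nonexpansive_diff_le[OF assms(1)])
  also have "\<dots> \<le> spec_norm (?A' - ?A) * norm ?u + spec_norm ?A * norm (?u - ?v)"
    by (rule norm_matrix_vector_mult_diff_le)
  also have "\<dots> \<le> \<Delta> * (B ^ ?k * norm x) + B * (real ?k * \<Delta> * B ^ (?k - 1) * norm x)"
    using Cons.prems IH u assms(3,4) by (intro add_mono mult_mono) simp_all
  also have "\<dots> = real (Suc ?k) * \<Delta> * B ^ ?k * norm x"
    by (cases ?k) (simp_all add: algebra_simps)
  finally show ?case
    by simp
qed

theorem lemma3:
  fixes T That :: "real^'n^'n" and h :: "nat \<Rightarrow> real \<Rightarrow> real" and J :: nat
    and \<rho> :: "real \<Rightarrow> real" and \<Delta> B :: real and x :: "real^'n" and js :: "nat list"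
  assumes "transpose T = T" and "transpose That = That"
    and "\<And>a b. \<bar>\<rho> a - \<rho> b\<bar> \<le> \<bar>a - b\<bar>" and "\<rho> 0 = 0"
    and "\<Delta> \<ge> 0"
    and "\<And>j. j < J \<Longrightarrow> spec_norm (mat_fun (h j) That - mat_fun (h j) T) \<le> \<Delta>"
    and "B > 0"
    and "\<And>j. j < J \<Longrightarrow> spec_norm (mat_fun (h j) T) \<le> B"
    and "\<And>j. j < J \<Longrightarrow> spec_norm (mat_fun (h j) That) \<le> B"
    and "length js \<ge> 1" and "set js \<subseteq> {..<J}"
  shows "norm (scat h \<rho> That js x - scat h \<rho> T js x)
           \<le> real (length js) * \<Delta> * B ^ (length js - 1) * norm x"
proof (rule norm_scat_diff_le)
  show "\<And>a b. \<bar>\<rho> a - \<rho> b\<bar> \<le> \<bar>a - b\<bar>" "\<rho> 0 = 0" "\<Delta> \<ge> 0" "B \<ge> 0"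
    using assms(3-5,7) by simp_all
  show "\<And>j. j \<in> set js \<Longrightarrow> spec_norm (mat_fun (h j) That - mat_fun (h j) T) \<le> \<Delta>"
    and "\<And>j. j \<in> set js \<Longrightarrow> spec_norm (mat_fun (h j) T) \<le> B"
    and "\<And>j. j \<in> set js \<Longrightarrow> spec_norm (mat_fun (h j) That) \<le> B"
    using assms(6,8,9,11) by auto
qed

end
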